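(* Let $P$ be an $n\times n$ integer matrix which is anticommutative, i.e. $P^{T}\,\overline I\,P\cong\overline I$, where $\overline I=J-I$ and $J$ is the all-ones $n\times n$ matrix. Let $m$ be the number of columns of $P$ with odd entry sum and $k=n-m$ (equivalently, after a simultaneous permutation of rows and columns, $P^TP\cong\begin{bmatrix} I_m & J\\ J & \overline I_k\end{bmatrix}$). Then, unless $m$ is even and $k$ is odd, $P$ is dyadically invertible.
   Context: For integer matrices, $A\cong B$ means $A\equiv B\pmod 2$ entrywise. A square integer matrix $P$ is dyadically invertible if there is an integer matrix $A$ with $AP\cong I$. $J$ denotes a block of all ones of the appropriate size and $\overline I_k=J_{k\times k}-I_k$. *)

theory Defs
  imports "HOL-Analysis.Analysis"
begin

definition cong2 :: "int ^'n ^'m \<Rightarrow> int ^'n ^'m \<Rightarrow> bool" where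
  "cong2 A B \<longleftrightarrow> (\<forall>i j. A $ i $ j mod 2 = B $ i $ j mod 2)"

definition Ibar :: "int ^'n ^'n" where
  "Ibar = (\<chi> i j. if i = j then 0 else 1)"

definition dyadically_invertible :: "int ^'n ^'n \<Rightarrow> bool" where
  "dyadically_invertible P \<longleftrightarrow> (\<exists>A :: int ^'n ^'n. cong2 (A ** P) (mat 1))"

definition odd_cols :: "int ^'n ^'n \<Rightarrow> nat" where
  "odd_cols P = card {j. odd (\<Sum>i\<in>UNIV. P $ i $ j)}"

end

theory Submission
  imports Defs "HOL-Library.Z2"
begin

(* Reduce modulo 2: the hypothesis becomes Q^T Ibar Q = Ibar over the field of two
   elements, and dyadic invertibility of P becomes invertibility of Q. If Q were
   singular, a nonzero kernel vector x would satisfy Ibar x = 0; since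
   (Ibar x)_i = (sum of x) - x_i, the vector x is constant, hence all ones, and
   sum x = n forces n odd. Then every row sum of P is even, so the total sum of P
   is even, and so is the number m of odd column sums: m is even and k = n - m is
   odd, the excluded case. *)

definition mat_mod2 :: "int ^'n ^'m \<Rightarrow> bit ^'n ^'m" where
  "mat_mod2 A = (\<chi> i j. of_int (A $ i $ j))"

lemma of_int_bit_eq_0_iff: "(of_int z :: bit) = 0 \<longleftrightarrow> even z"
proof -
  have "(of_int z :: bit) = of_int (z mod 2)"
    by (metis bit_2_eq_0 add_0 mult_zero_left mult_div_mod_eq of_int_add of_int_mult of_int_numeral)
  then show ?thesis
    by (cases "even z") (simp_all add: even_iff_mod_2_eq_zero odd_iff_mod_2_eq_one)
qed

lemma of_int_bit_eq_iff: "(of_int x :: bit) = of_int y \<longleftrightarrow> x mod 2 = y mod 2"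
  by (metis eq_iff_diff_eq_0 mod_eq_dvd_iff of_int_bit_eq_0_iff of_int_diff)

lemma cong2_iff_mat_mod2_eq: "cong2 A B \<longleftrightarrow> mat_mod2 A = mat_mod2 B"
  by (simp add: cong2_def mat_mod2_def vec_eq_iff of_int_bit_eq_iff)

lemma mat_mod2_mult: "mat_mod2 (A ** B) = mat_mod2 A ** mat_mod2 B"
  by (simp add: mat_mod2_def vec_eq_iff matrix_matrix_mult_def)

lemma mat_mod2_transpose: "mat_mod2 (transpose A) = transpose (mat_mod2 A)"
  by (simp add: mat_mod2_def vec_eq_iff transpose_def)

lemma mat_mod2_mat_1: "mat_mod2 (mat 1) = mat 1"
  by (simp add: mat_mod2_def vec_eq_iff mat_def)

lemma mat_mod2_lift: "mat_mod2 (\<chi> i j. of_bit (B $ i $ j)) = B"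
  by (simp add: mat_mod2_def vec_eq_iff)

lemma dyadically_invertible_if_invertible_mod2:
  fixes P :: "int ^'n ^'n"
  assumes "invertible (mat_mod2 P)"
  shows "dyadically_invertible P"
proof -
  obtain B where B: "B ** mat_mod2 P = mat 1"
    using assms invertible_left_inverse by blast
  define A :: "int ^'n ^'n" where "A = (\<chi> i j. of_bit (B $ i $ j))"
  have "mat_mod2 A = B"
    unfolding A_def by (rule mat_mod2_lift)
  then have "cong2 (A ** P) (mat 1)"
    by (simp add: cong2_iff_mat_mod2_eq mat_mod2_mult mat_mod2_mat_1 B)
  then show ?thesis
    unfolding dyadically_invertible_def by blast
qed

lemma mat_mod2_mult_ones_eq_0_iff:
  "mat_mod2 P *v (\<chi> j. 1) = 0 \<longleftrightarrow> (\<forall>i. even (\<Sum>j\<in>UNIV. P $ i $ j))"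
proof -
  have row_sum: "(mat_mod2 P *v (\<chi> j. 1)) $ i = of_int (\<Sum>j\<in>UNIV. P $ i $ j)" for i
    by (simp only: matrix_vector_mult_def mat_mod2_def vec_lambda_beta mult_1_right of_int_sum)
  show ?thesis
    by (simp only: vec_eq_iff zero_index row_sum of_int_bit_eq_0_iff)
qed

lemma mult_vec_J_minus_I_eq_0_imp_const:
  fixes x :: "'a::comm_ring_1 ^'n"
  assumes "(\<chi> i j. if i = j then 0 else 1) *v x = 0"
  shows "x $ i = (\<Sum>j\<in>UNIV. x $ j)"
proof -
  have "0 = (\<Sum>j\<in>UNIV. (if i = j then 0 else 1) * x $ j)"
    using assms by (simp add: vec_eq_iff matrix_vector_mult_def)
  also have "\<dots> = (\<Sum>j\<in>UNIV. x $ j - (if i = j then x $ j else 0))"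
    by (rule sum.cong) simp_all
  also have "\<dots> = (\<Sum>j\<in>UNIV. x $ j) - x $ i"
    by (simp add: sum_subtractf)
  finally show ?thesis
    by simp
qed

lemma even_sum_iff_even_card_odd:
  fixes f :: "'a \<Rightarrow> 'b::semiring_parity"
  assumes "finite A"
  shows "even (\<Sum>a\<in>A. f a) \<longleftrightarrow> even (card {a\<in>A. odd (f a)})"
  using assms
proof (induction A rule: finite_induct)
  case (insert b A)
  have "{a \<in> insert b A. odd (f a)} = (if odd (f b) then insert b else id) {a\<in>A. odd (f a)}"
    by auto
  then show ?case
    using insert by simp
qed simp

lemma even_odd_cols_if_even_row_sums:
  assumes "\<forall>i. even (\<Sum>j\<in>UNIV. P $ i $ j)"
  shows "even (odd_cols P)"
proof -
  have "even (\<Sum>i\<in>UNIV. \<Sum>j\<in>UNIV. P $ i $ j)"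
    using assms by (simp add: dvd_sum)
  also have "(\<Sum>i\<in>UNIV. \<Sum>j\<in>UNIV. P $ i $ j) = (\<Sum>j\<in>UNIV. \<Sum>i\<in>UNIV. P $ i $ j)"
    by (rule sum.swap)
  finally have "even (\<Sum>j\<in>UNIV. \<Sum>i\<in>UNIV. P $ i $ j)" .
  then show ?thesis
    by (simp add: odd_cols_def even_sum_iff_even_card_odd)
qed

lemma mat_mod2_Ibar: "mat_mod2 Ibar = (\<chi> i j. if i = j then 0 else 1)"
  by (simp add: mat_mod2_def Ibar_def vec_eq_iff)

lemma anticommutative_mod2_kernel:
  fixes Q :: "bit ^'n ^'n"
  assumes anticomm: "transpose Q ** mat_mod2 Ibar ** Q = mat_mod2 Ibar"
    and "Q *v x = 0" and "x \<noteq> 0"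
  shows "x = (\<chi> i. 1)" and "odd CARD('n)"
proof -
  have "mat_mod2 Ibar *v x = (transpose Q ** mat_mod2 Ibar) *v (Q *v x)"
    by (simp only: anticomm matrix_vector_mul_assoc)
  then have "(\<chi> i j. if i = j then 0 else 1) *v x = 0"
    by (simp add: \<open>Q *v x = 0\<close> flip: mat_mod2_Ibar)
  then have const: "x $ i = (\<Sum>j\<in>UNIV. x $ j)" for i
    by (rule mult_vec_J_minus_I_eq_0_imp_const)
  have "(\<Sum>j\<in>UNIV. x $ j) \<noteq> 0"
    using \<open>x \<noteq> 0\<close> const by (metis vec_eq_iff zero_index)
  then have sum_1: "(\<Sum>j\<in>UNIV. x $ j) = 1"
    by simp
  then show ones: "x = (\<chi> i. 1)"
    unfolding vec_eq_iff using trans[OF const sum_1] by simp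
  have "(of_int (int CARD('n)) :: bit) = 1"
    using sum_1 by (simp add: ones)
  then show "odd CARD('n)"
    using of_int_bit_eq_0_iff by fastforce
qed

theorem proposition3p6:
  fixes P :: "int ^'n ^'n"
  assumes anticomm: "cong2 (transpose P ** Ibar ** P) Ibar"
  shows "\<not> (even (odd_cols P) \<and> odd (CARD('n) - odd_cols P)) \<longrightarrow> dyadically_invertible P"
proof
  assume excluded: "\<not> (even (odd_cols P) \<and> odd (CARD('n) - odd_cols P))"
  have anticomm_mod2: "transpose (mat_mod2 P) ** mat_mod2 Ibar ** mat_mod2 P = mat_mod2 Ibar"
    using anticomm by (simp only: cong2_iff_mat_mod2_eq mat_mod2_mult mat_mod2_transpose)
  have "invertible (mat_mod2 P)"
  proof (rule ccontr)
    assume "\<not> invertible (mat_mod2 P)"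
    then obtain x where "mat_mod2 P *v x = 0" "x \<noteq> 0"
      by (metis invertible_left_inverse matrix_left_invertible_ker)
    with anticomm_mod2 have "mat_mod2 P *v (\<chi> i. 1) = 0" and n_odd: "odd CARD('n)"
      using anticommutative_mod2_kernel by metis+
    then have m_even: "even (odd_cols P)"
      by (simp add: mat_mod2_mult_ones_eq_0_iff even_odd_cols_if_even_row_sums)
    have "odd_cols P \<le> CARD('n)"
      unfolding odd_cols_def by (rule card_mono) auto
    with m_even n_odd have "odd (CARD('n) - odd_cols P)"
      by presburger
    with m_even excluded show False
      by blast
  qed
  then show "dyadically_invertible P"
    by (rule dyadically_invertible_if_invertible_mod2)
qed

end
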